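(* Consider scheduling a single task on $n\ge 2$ machines without payments, in the model where machines are bound by their declarations (described in the context). Fix constants $L>2(n-1)$ and $c>1$, and let $\mathcal A_{L,c}$ be the following randomized allocation rule. Given declarations $\hat{\mathbf t}=(\hat t_1,\dots,\hat t_n)$, let $\hat t_{\min}$ be the smallest declaration and $N_{\min}$ the set of machines declaring it, and let $\hat t_{\mathrm{sec}}$ be the second smallest distinct declaration and $N_{\mathrm{sec}}$ the set of machines declaring it (if all machines declare the same value, set $\hat t_{\mathrm{sec}}=\hat t_{\min}$); let $n_{\min}=|N_{\min}|$, $n_{\mathrm{sec}}=|N_{\mathrm{sec}}|$. The probability $a_i$ that machine $i$ gets the task is: (i) if $\hat t_{\min}=\hat t_{\mathrm{sec}}$: $a_i=\tfrac1n$ for all $i$; (ii) if $\hat t_{\min}<\hat t_{\mathrm{sec}}<c\,\hat t_{\min}$: $a_i=\frac{1}{L\,n_{\min}}$ for $i\in N_{\min}$, $a_i=\frac{1-1/L}{n_{\mathrm{sec}}}$ for $i\in N_{\mathrm{sec}}$, and $a_i=0$ otherwise; (iii) if $\hat t_{\mathrm{sec}}\ge c\,\hat t_{\min}$: $a_i=\frac{1}{n_{\min}}\Big(1-\sum_{k\notin N_{\min}}\frac{\hat t_{\min}}{L\,\hat t_k}\Big)$ for $i\in N_{\min}$, and $a_i=\frac{\hat t_{\min}}{L\,\hat t_i}$ for $i\notin N_{\min}$. Then the pure Price of Anarchy of $\mathcal A_{L,c}$ is at most $1+\frac{n-1}{L}$.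
   Context: Model: there are $n$ machines and one task. Machine $i$ has a private true execution time $t_i\ge 0$ for the task and reports a declaration $\hat t_i\ge 0$. A (randomized) allocation rule maps the declaration vector $\hat{\mathbf t}$ to probabilities $a_i(\hat{\mathbf t})$ with $\sum_i a_i=1$; no payments are used. Machines are bound by their declarations: if machine $i$ gets the task she executes it for time $\max\{\hat t_i,t_i\}$. Hence the (expected) cost of machine $i$ is $C_i(\hat{\mathbf t})=a_i(\hat{\mathbf t})\max\{\hat t_i,t_i\}$, and the makespan is $\mathcal M(\hat{\mathbf t})=\sum_i a_i(\hat{\mathbf t})\max\{\hat t_i,t_i\}$. A pure Nash equilibrium is a deterministic declaration vector $\hat{\mathbf t}$ such that for every machine $i$ and every alternative declaration $x\ge 0$, $C_i(\hat{\mathbf t})\le C_i(x,\hat{\mathbf t}_{-i})$. The pure Price of Anarchy of a rule is the supremum, over all true instances $\mathbf t$, of the ratio of the makespan of the worst pure Nash equilibrium to the optimal makespan $\min_i t_i$. *)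

theory Defs
  imports Complex_Main "HOL-Library.Extended_Real"
begin

text \<open>Machines are indexed by 0..n-1. A declaration vector / true-time vector is a
function nat => real; only the values on {..<n} matter.
An allocation rule maps a declaration vector to the probabilities a_i.\<close>

type_synonym alloc_rule = "(nat \<Rightarrow> real) \<Rightarrow> nat \<Rightarrow> real"

definition t_min :: "nat \<Rightarrow> (nat \<Rightarrow> real) \<Rightarrow> real" where
  "t_min n d = Min (d ` {..<n})"

definition N_min :: "nat \<Rightarrow> (nat \<Rightarrow> real) \<Rightarrow> nat set" where
  "N_min n d = {i. i < n \<and> d i = t_min n d}"

definition t_sec :: "nat \<Rightarrow> (nat \<Rightarrow> real) \<Rightarrow> real" where
  "t_sec n d = (if {..<n} - N_min n d = {} then t_min n d
                else Min (d ` ({..<n} - N_min n d)))"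

definition N_sec :: "nat \<Rightarrow> (nat \<Rightarrow> real) \<Rightarrow> nat set" where
  "N_sec n d = {i. i < n \<and> d i = t_sec n d}"

definition alloc_Lc :: "nat \<Rightarrow> real \<Rightarrow> real \<Rightarrow> alloc_rule" where
  "alloc_Lc n L c d i =
     (if t_min n d = t_sec n d then 1 / real n
      else if t_sec n d < c * t_min n d then
        (if i \<in> N_min n d then 1 / (L * real (card (N_min n d)))
         else if i \<in> N_sec n d then (1 - 1 / L) / real (card (N_sec n d))
         else 0)
      else
        (if i \<in> N_min n d then
           (1 / real (card (N_min n d))) *
             (1 - (\<Sum>k\<in>{..<n} - N_min n d. t_min n d / (L * d k)))
         else t_min n d / (L * d i)))"

text \<open>Expected cost of machine i (bound by declarations).\<close>
definition cost :: "alloc_rule \<Rightarrow> (nat \<Rightarrow> real) \<Rightarrow> (nat \<Rightarrow> real) \<Rightarrow> nat \<Rightarrow> real" where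
  "cost a t d i = a d i * max (d i) (t i)"

definition makespan :: "alloc_rule \<Rightarrow> nat \<Rightarrow> (nat \<Rightarrow> real) \<Rightarrow> (nat \<Rightarrow> real) \<Rightarrow> real" where
  "makespan a n t d = (\<Sum>i<n. a d i * max (d i) (t i))"

definition pure_NE :: "alloc_rule \<Rightarrow> nat \<Rightarrow> (nat \<Rightarrow> real) \<Rightarrow> (nat \<Rightarrow> real) \<Rightarrow> bool" where
  "pure_NE a n t d \<longleftrightarrow>
     (\<forall>i<n. 0 \<le> d i) \<and>
     (\<forall>i<n. \<forall>x\<ge>0. cost a t d i \<le> cost a t (d(i := x)) i)"

text \<open>Pure Price of Anarchy: supremum over true instances (with positive optimal
makespan min_i t_i) of worst pure NE makespan divided by the optimum.\<close>
definition pure_PoA :: "alloc_rule \<Rightarrow> nat \<Rightarrow> ereal" where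
  "pure_PoA a n =
     (SUP t \<in> {t. \<forall>i<n. 0 < t i}.
        SUP d \<in> {d. pure_NE a n t d}.
          ereal (makespan a n t d / Min (t ` {..<n})))"

end

theory Submission
  imports Defs
begin

text \<open>A machine that shares the minimal declaration with another machine can always raise its
  declaration to some \<open>x \<ge> c \<cdot> t_min\<close> above its true time; rule (iii) then charges it at most
  \<open>t_min / L\<close>, so at an equilibrium such a machine gets the task with probability at most \<open>1/L\<close>.
  Rules (i) and (ii), and ties at the minimum under rule (iii), each give some such machine a larger
  probability (this is where \<open>L > n\<close> enters). Hence an equilibrium has a unique minimal
  declaration \<open>d w\<close> and is governed by rule (iii). Deviations of \<open>w\<close> itself force \<open>t w = d w\<close>
  (here \<open>L > 2(n - 1)\<close> makes the winner's payoff increasing), and if another machine were truly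
  faster it could profitably undercut \<open>d w\<close> within a factor \<open>c\<close>. So \<open>d w\<close> is the optimum, the
  winner contributes at most \<open>d w\<close> and each of the other \<open>n - 1\<close> machines at most \<open>d w / L\<close>.\<close>

section \<open>Order statistics of a declaration vector\<close>

lemma t_min_le: "i < n \<Longrightarrow> t_min n d \<le> d i"
  unfolding t_min_def by (rule Min_le) auto

lemma t_min_attained: "0 < n \<Longrightarrow> \<exists>j<n. d j = t_min n d"
proof -
  assume "0 < n"
  then have "Min (d ` {..<n}) \<in> d ` {..<n}" by (intro Min_in) auto
  then show ?thesis unfolding t_min_def by auto
qed

lemma t_min_eqI: "j < n \<Longrightarrow> (\<And>i. i < n \<Longrightarrow> d j \<le> d i) \<Longrightarrow> t_min n d = d j"
  unfolding t_min_def by (rule Min_eqI) auto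

lemma t_sec_eq_t_min_iff: "t_sec n d = t_min n d \<longleftrightarrow> (\<forall>i<n. d i = t_min n d)"
proof
  assume "t_sec n d = t_min n d"
  show "\<forall>i<n. d i = t_min n d"
  proof (rule ccontr)
    let ?S = "{..<n} - N_min n d"
    assume "\<not> (\<forall>i<n. d i = t_min n d)"
    then have "?S \<noteq> {}" unfolding N_min_def by auto
    then have "t_sec n d \<in> d ` ?S" unfolding t_sec_def by (simp add: Min_in)
    with \<open>t_sec n d = t_min n d\<close> show False unfolding N_min_def by auto
  qed
qed (auto simp: t_sec_def N_min_def)

lemma t_min_le_t_sec: "t_min n d \<le> t_sec n d"
  unfolding t_sec_def by (auto intro!: Min.boundedI t_min_le)

lemma t_min_less_t_sec_iff: "t_min n d < t_sec n d \<longleftrightarrow> (\<exists>i<n. d i \<noteq> t_min n d)"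
  using t_sec_eq_t_min_iff[of n d] t_min_le_t_sec[of n d] by auto

lemma t_sec_attained: "t_min n d < t_sec n d \<Longrightarrow> \<exists>k<n. d k = t_sec n d"
proof -
  let ?S = "{..<n} - N_min n d"
  assume "t_min n d < t_sec n d"
  then have "?S \<noteq> {}" unfolding t_sec_def by auto
  then have "t_sec n d \<in> d ` ?S" unfolding t_sec_def by (simp add: Min_in)
  then show ?thesis by auto
qed

lemma
  assumes "2 \<le> n" "i < n" "\<And>k. k < n \<Longrightarrow> k \<noteq> i \<Longrightarrow> d i < d k"
  shows t_min_unique_min: "t_min n d = d i"
    and t_sec_unique_min: "t_sec n d = Min (d ` ({..<n} - {i}))"
    and alloc_Lc_unique_min: "alloc_Lc n L c d i =
      (if t_sec n d < c * d i then 1 / L else 1 - (\<Sum>k\<in>{..<n} - {i}. d i / (L * d k)))"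
proof -
  show min: "t_min n d = d i"
    using assms by (intro t_min_eqI) (auto intro: less_imp_le)
  have N_min: "N_min n d = {i}" unfolding N_min_def min using assms by force
  have "(if i = 0 then 1 else 0) \<in> {..<n} - {i}" using assms by auto
  then have ne: "{..<n} - N_min n d \<noteq> {}" unfolding N_min by blast
  show "t_sec n d = Min (d ` ({..<n} - {i}))" unfolding t_sec_def using ne N_min by simp
  have "\<exists>k<n. d k \<noteq> t_min n d" using ne unfolding N_min_def by auto
  then have "t_min n d < t_sec n d" using t_min_less_t_sec_iff by blast
  then show "alloc_Lc n L c d i =
      (if t_sec n d < c * d i then 1 / L else 1 - (\<Sum>k\<in>{..<n} - {i}. d i / (L * d k)))"
    unfolding alloc_Lc_def N_min min by simp
qed

lemma alloc_Lc_le_above_min: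
  assumes "i < n" "d i \<noteq> t_min n d" "d i = t_sec n d \<Longrightarrow> c * t_min n d \<le> t_sec n d"
    and "0 < L" "0 \<le> t_min n d" "0 < d i"
  shows "alloc_Lc n L c d i \<le> t_min n d / (L * d i)"
proof -
  have "t_min n d < t_sec n d" using assms(1,2) t_min_less_t_sec_iff by blast
  moreover have "i \<notin> N_min n d" using assms(2) unfolding N_min_def by auto
  moreover have "0 \<le> t_min n d / (L * d i)" using assms(4-6) by simp
  moreover have "t_sec n d < c * t_min n d \<Longrightarrow> i \<notin> N_sec n d"
    using assms(3) unfolding N_sec_def by auto
  ultimately show ?thesis unfolding alloc_Lc_def by auto
qed

section \<open>Pure Nash equilibria of the rule\<close>

locale Lc_NE =
  fixes n :: nat and L c :: real and t d :: "nat \<Rightarrow> real"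
  assumes two_le_n: "2 \<le> n" and L_gt: "L > 2 * (real n - 1)" and c_gt_1: "c > 1"
    and t_pos: "\<And>i. i < n \<Longrightarrow> 0 < t i"
    and NE: "pure_NE (alloc_Lc n L c) n t d"
begin

lemma n_less_L: "real n < L"
  using L_gt two_le_n by simp

lemma L_pos: "0 < L"
  using n_less_L by simp

lemma decl_nonneg: "i < n \<Longrightarrow> 0 \<le> d i"
  using NE unfolding pure_NE_def by auto

lemma no_profitable_deviation: "i < n \<Longrightarrow> 0 \<le> x \<Longrightarrow>
   alloc_Lc n L c d i * max (d i) (t i) \<le> alloc_Lc n L c (d(i := x)) i * max x (t i)"
  using NE unfolding pure_NE_def cost_def by auto

lemma t_min_nonneg: "0 \<le> t_min n d"
  using t_min_attained[of n d] two_le_n decl_nonneg by force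

text \<open>If some other machine declares the minimum, machine \<open>i\<close> can always escape to a declaration
  \<open>x \<ge> c \<cdot> t_min\<close> above its true time, where it pays at most \<open>t_min / (L x) \<cdot> x\<close>.\<close>

lemma cost_le_t_min_div_L:
  assumes "i < n" "j < n" "j \<noteq> i" "d j = t_min n d"
  shows "alloc_Lc n L c d i * max (d i) (t i) \<le> t_min n d / L"
proof -
  let ?v = "t_min n d"
  define x where "x = max (c * ?v) (t i) + ?v + 1"
  have "?v \<le> c * ?v" using c_gt_1 t_min_nonneg mult_right_mono[of 1 c ?v] by simp
  then have x: "c * ?v \<le> x" "?v < x" "t i \<le> x" "0 < x"
    using t_min_nonneg t_pos[OF assms(1)] unfolding x_def by auto
  let ?d = "d(i := x)"
  have t_min_dev: "t_min n ?d = ?v"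
  proof -
    have "t_min n ?d = ?d j"
      by (rule t_min_eqI) (use assms x t_min_le[of _ n d] in auto)
    then show ?thesis using assms by simp
  qed
  have "alloc_Lc n L c ?d i \<le> ?v / (L * x)"
    using alloc_Lc_le_above_min[of i n ?d c L] assms x t_min_dev L_pos t_min_nonneg by auto
  then have "alloc_Lc n L c ?d i * x \<le> ?v / (L * x) * x"
    using x(4) by (rule mult_right_mono[OF _ less_imp_le])
  also have "\<dots> = ?v / L" using x by simp
  finally show ?thesis
    using no_profitable_deviation[of i x] assms x by (simp add: max_absorb1)
qed

lemma alloc_le_inv_L:
  assumes "i < n" "j < n" "j \<noteq> i" "d j = t_min n d"
  shows "alloc_Lc n L c d i \<le> 1 / L"
proof -
  have pos: "0 < max (d i) (t i)" using t_pos[OF assms(1)] by auto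
  have "alloc_Lc n L c d i * max (d i) (t i) \<le> t_min n d / L"
    by (rule cost_le_t_min_div_L[OF assms])
  also have "\<dots> \<le> max (d i) (t i) / L"
    using t_min_le[of i n d] assms(1) L_pos by (auto intro: divide_right_mono)
  finally have "alloc_Lc n L c d i * max (d i) (t i) \<le> 1 / L * max (d i) (t i)" by simp
  then show ?thesis using pos by (rule mult_right_le_imp_le)
qed

lemma t_min_less_t_sec: "t_min n d < t_sec n d"
proof (rule ccontr)
  assume "\<not> ?thesis"
  then have equal: "\<And>i. i < n \<Longrightarrow> d i = t_min n d" and "t_sec n d = t_min n d"
    using t_min_less_t_sec_iff[of n d] t_sec_eq_t_min_iff[of n d] by auto
  then have "alloc_Lc n L c d 0 = 1 / real n" unfolding alloc_Lc_def by simp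
  moreover have "alloc_Lc n L c d 0 \<le> 1 / L"
    using alloc_le_inv_L[of 0 1] two_le_n equal by simp
  ultimately show False using n_less_L two_le_n by (simp add: divide_le_eq)
qed

lemma c_t_min_le_t_sec: "c * t_min n d \<le> t_sec n d"
proof (rule ccontr)
  assume close: "\<not> ?thesis"
  obtain k where k: "k < n" "d k = t_sec n d" using t_sec_attained t_min_less_t_sec by blast
  obtain j where j: "j < n" "d j = t_min n d" using t_min_attained[of n d] two_le_n by auto
  let ?ns = "card (N_sec n d)"
  have "N_sec n d \<subseteq> {..<n} - {j}" unfolding N_sec_def using j t_min_less_t_sec by auto
  then have "?ns \<le> n - 1" using j card_mono[of "{..<n} - {j}"] by fastforce
  moreover have "k \<in> N_sec n d" "k \<notin> N_min n d"
    using k t_min_less_t_sec unfolding N_sec_def N_min_def by auto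
  moreover have ns_pos: "0 < ?ns"
    using \<open>k \<in> N_sec n d\<close> unfolding N_sec_def by (auto simp: card_gt_0_iff)
  ultimately have ns_lt: "real ?ns < L - 1"
    and alloc_k: "alloc_Lc n L c d k = (1 - 1 / L) / real ?ns"
    using close t_min_less_t_sec n_less_L two_le_n unfolding alloc_Lc_def by (auto simp: of_nat_diff)
  have "alloc_Lc n L c d k \<le> 1 / L"
    using alloc_le_inv_L[of k j] j k t_min_less_t_sec by force
  then have "1 - 1 / L \<le> real ?ns / L" using alloc_k ns_pos by (simp add: divide_le_eq)
  then have "(1 - 1 / L) * L \<le> real ?ns / L * L" using L_pos by (intro mult_right_mono) auto
  then show False using ns_lt L_pos by (simp add: left_diff_distrib)
qed

lemma inv_L_less_alloc_min:
  assumes "i < n" "d i = t_min n d"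
  shows "1 / L < alloc_Lc n L c d i"
proof -
  let ?v = "t_min n d" and ?M = "N_min n d"
  let ?nm = "card ?M"
  have M_sub: "?M \<subseteq> {..<n}" unfolding N_min_def by auto
  then have fin: "finite ?M" by (rule finite_subset) simp
  have "i \<in> ?M" using assms unfolding N_min_def by auto
  then have nm_pos: "0 < ?nm" using fin by (auto simp: card_gt_0_iff)
  have nm_le: "?nm \<le> n" using card_mono[OF _ M_sub] by simp
  have "(\<Sum>k\<in>{..<n} - ?M. ?v / (L * d k)) \<le> (\<Sum>k\<in>{..<n} - ?M. 1 / L)"
  proof (rule sum_mono)
    fix k assume "k \<in> {..<n} - ?M"
    then have "?v < d k" using t_min_le[of k n d] unfolding N_min_def by auto
    then show "?v / (L * d k) \<le> 1 / L" using t_min_nonneg L_pos by (simp add: field_simps)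
  qed
  also have "\<dots> = (real n - real ?nm) / L"
    using M_sub fin nm_le by (simp add: card_Diff_subset of_nat_diff)
  finally have "(1 - (real n - real ?nm) / L) / real ?nm \<le> alloc_Lc n L c d i"
    using \<open>i \<in> ?M\<close> nm_pos t_min_less_t_sec c_t_min_le_t_sec
    unfolding alloc_Lc_def by (simp add: divide_right_mono)
  moreover have "1 / L < (1 - (real n - real ?nm) / L) / real ?nm"
    using n_less_L nm_pos L_pos by (simp add: field_simps)
  ultimately show ?thesis by linarith
qed

lemma unique_min_exists: "\<exists>w<n. \<forall>k<n. k \<noteq> w \<longrightarrow> d w < d k"
proof (rule ccontr)
  obtain j where j: "j < n" "d j = t_min n d" using t_min_attained[of n d] two_le_n by auto
  assume "\<not> ?thesis"
  then obtain i where i: "i < n" "i \<noteq> j" "\<not> d j < d i" using j by blast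
  then have "d i = t_min n d" using j t_min_le[of i n d] by auto
  then have "1 / L < alloc_Lc n L c d i" using i by (intro inv_L_less_alloc_min)
  moreover have "alloc_Lc n L c d i \<le> 1 / L" using alloc_le_inv_L[of i j] i j by auto
  ultimately show False by simp
qed

end

section \<open>The unique minimum of an equilibrium\<close>

locale Lc_NE_winner = Lc_NE +
  fixes w :: nat
  assumes w_less_n: "w < n" and w_unique_min: "\<And>k. k < n \<Longrightarrow> k \<noteq> w \<Longrightarrow> d w < d k"
begin

lemma t_min_eq_d_w: "t_min n d = d w"
  using t_min_unique_min[where d = d, OF two_le_n w_less_n w_unique_min] .

lemma t_sec_eq_Min_others: "t_sec n d = Min (d ` ({..<n} - {w}))"
  using t_sec_unique_min[where d = d, OF two_le_n w_less_n w_unique_min] .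

lemma t_sec_le_others: "k < n \<Longrightarrow> k \<noteq> w \<Longrightarrow> t_sec n d \<le> d k"
  unfolding t_sec_eq_Min_others by (rule Min_le) auto

lemma d_w_less_t_sec: "d w < t_sec n d"
  using t_min_less_t_sec t_min_eq_d_w by simp

lemma d_w_nonneg: "0 \<le> d w"
  using decl_nonneg w_less_n .

lemma others_pos: "k < n \<Longrightarrow> k \<noteq> w \<Longrightarrow> 0 < d k"
  using w_unique_min d_w_nonneg by force

definition rest_weight :: real where
  "rest_weight = (\<Sum>k\<in>{..<n} - {w}. 1 / (L * d k))"

lemma rest_weight_pos: "0 < rest_weight"
proof -
  have "(if w = 0 then 1 else 0) \<in> {..<n} - {w}" using two_le_n w_less_n by auto
  then show ?thesis
    unfolding rest_weight_def using others_pos L_pos by (intro sum_pos) auto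
qed

lemma d_w_rest_weight_le: "d w * rest_weight \<le> (real n - 1) / L"
proof -
  have "d w * rest_weight = (\<Sum>k\<in>{..<n} - {w}. d w / (L * d k))"
    unfolding rest_weight_def by (simp add: sum_distrib_left)
  also have "\<dots> \<le> (\<Sum>k\<in>{..<n} - {w}. 1 / L)"
  proof (rule sum_mono)
    fix k assume "k \<in> {..<n} - {w}"
    then have "d w < d k" "0 < d k" using w_unique_min others_pos by auto
    then show "d w / (L * d k) \<le> 1 / L" using L_pos by (simp add: field_simps)
  qed
  also have "\<dots> = (real n - 1) / L" using w_less_n by (simp add: of_nat_diff)
  finally show ?thesis .
qed

lemma d_w_rest_weight_less_half: "d w * rest_weight < 1 / 2"
proof -
  have "(real n - 1) / L < 1 / 2" using L_gt L_pos by (simp add: field_simps)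
  then show ?thesis using d_w_rest_weight_le by linarith
qed

lemma alloc_w_deviation:
  assumes "0 \<le> x" "x < t_sec n d"
  shows "alloc_Lc n L c (d(w := x)) w =
    (if t_sec n d < c * x then 1 / L else 1 - x * rest_weight)"
proof -
  let ?d = "d(w := x)"
  have unique: "\<And>k. k < n \<Longrightarrow> k \<noteq> w \<Longrightarrow> ?d w < ?d k"
    using assms t_sec_le_others by fastforce
  have "?d ` ({..<n} - {w}) = d ` ({..<n} - {w})" by auto
  then have "t_sec n ?d = t_sec n d"
    using t_sec_unique_min[where d = ?d, OF two_le_n w_less_n unique] t_sec_eq_Min_others by simp
  moreover have "(\<Sum>k\<in>{..<n} - {w}. ?d w / (L * ?d k)) = x * rest_weight"
    unfolding rest_weight_def sum_distrib_left by (intro sum.cong) auto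
  ultimately show ?thesis
    using alloc_Lc_unique_min[where d = ?d and L = L and c = c, OF two_le_n w_less_n unique]
    by simp
qed

lemma alloc_w: "alloc_Lc n L c d w = 1 - d w * rest_weight"
  using alloc_w_deviation[of "d w"] d_w_nonneg d_w_less_t_sec c_t_min_le_t_sec t_min_eq_d_w
  by simp

lemma inv_L_less_alloc_w: "1 / L < 1 - d w * rest_weight"
  using inv_L_less_alloc_min[OF w_less_n t_min_eq_d_w[symmetric]] alloc_w by simp

lemma t_w_le_d_w: "t w \<le> d w"
proof (rule ccontr)
  let ?D = "d w" and ?S = rest_weight
  assume "\<not> ?thesis"
  define x where "x = (?D + min (t w) (t_sec n d)) / 2"
  have x: "?D < x" "x < t w" "x < t_sec n d"
    using \<open>\<not> t w \<le> d w\<close> d_w_less_t_sec unfolding x_def by auto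
  have "1 - x * ?S < 1 - ?D * ?S" using x rest_weight_pos by simp
  then have "alloc_Lc n L c (d(w := x)) w < 1 - ?D * ?S"
    using alloc_w_deviation[of x] x d_w_nonneg inv_L_less_alloc_w by auto
  then have "alloc_Lc n L c (d(w := x)) w * max x (t w) < alloc_Lc n L c d w * max ?D (t w)"
    using x t_pos[OF w_less_n] alloc_w by simp
  then show False using no_profitable_deviation[of w x] w_less_n x d_w_nonneg by simp
qed

text \<open>Declaring \<open>x < d w\<close> changes the payoff \<open>(1 - x S) x\<close> of the winner by
  \<open>(d w - x) (1 - S (d w + x))\<close>, which is positive because \<open>S \<cdot> d w < 1/2\<close>.\<close>

lemma d_w_le_t_w: "d w \<le> t w"
proof (rule ccontr)
  let ?D = "d w" and ?S = rest_weight and ?x = "t w"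
  assume "\<not> ?thesis"
  then have x: "0 < ?x" "?x < ?D" using t_pos[OF w_less_n] by auto
  have "alloc_Lc n L c (d(w := ?x)) w * ?x < (1 - ?D * ?S) * ?D"
  proof (cases "t_sec n d < c * ?x")
    case True
    have "1 / L * ?x < 1 / L * ?D" using x L_pos by (simp add: divide_strict_right_mono)
    also have "\<dots> < (1 - ?D * ?S) * ?D"
      using inv_L_less_alloc_w x by (intro mult_strict_right_mono) auto
    finally show ?thesis using True alloc_w_deviation[of ?x] x d_w_less_t_sec by simp
  next
    case False
    have "?x * ?S < ?D * ?S" using x rest_weight_pos by simp
    then have "?S * (?D + ?x) < 1" using d_w_rest_weight_less_half by (simp add: algebra_simps)
    then have "0 < (?D - ?x) * (1 - ?S * (?D + ?x))" using x by simp
    moreover have "(1 - ?D * ?S) * ?D - (1 - ?x * ?S) * ?x = (?D - ?x) * (1 - ?S * (?D + ?x))"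
      by (simp add: algebra_simps)
    ultimately show ?thesis using False alloc_w_deviation[of ?x] x d_w_less_t_sec by simp
  qed
  then show False
    using no_profitable_deviation[of w ?x] w_less_n x alloc_w by simp
qed

lemma t_w_eq_d_w: "t w = d w"
  using t_w_le_d_w d_w_le_t_w by simp

lemma alloc_undercut:
  assumes "j < n" "j \<noteq> w" "x < d w" "d w < c * x"
  shows "alloc_Lc n L c (d(j := x)) j = 1 / L"
proof -
  let ?d = "d(j := x)"
  have others: "k < n \<Longrightarrow> k \<noteq> j \<Longrightarrow> k \<noteq> w \<Longrightarrow> d w < ?d k" for k
    using w_unique_min by simp
  have unique: "\<And>k. k < n \<Longrightarrow> k \<noteq> j \<Longrightarrow> ?d j < ?d k"
    using assms others by (metis dual_order.strict_trans fun_upd_other fun_upd_same)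
  have "Min (?d ` ({..<n} - {j})) = d w"
    using assms others w_less_n by (intro Min_eqI) (auto intro: less_imp_le)
  then have "t_sec n ?d = d w"
    using t_sec_unique_min[where d = ?d, OF two_le_n assms(1) unique] by simp
  then show ?thesis
    using assms alloc_Lc_unique_min[where d = ?d and L = L and c = c, OF two_le_n assms(1) unique]
    by simp
qed

text \<open>If some machine \<open>j\<close> were truly faster than \<open>d w\<close>, it could undercut the winner by a
  declaration \<open>x\<close> with \<open>d w / c < x < d w\<close>, paying \<open>x / L\<close> instead of at least \<open>d w / L\<close>.\<close>

lemma Min_t_eq_d_w: "Min (t ` {..<n}) = d w"
proof -
  let ?D = "d w" and ?m = "Min (t ` {..<n})"
  have "?m \<in> t ` {..<n}" using two_le_n by (intro Min_in) (auto simp: lessThan_empty_iff)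
  then obtain j where j: "j < n" "t j = ?m" by auto
  have "?m \<le> ?D" using w_less_n t_w_eq_d_w by (auto intro!: Min_le image_eqI[of _ t w])
  moreover have "\<not> ?m < ?D"
  proof
    assume m: "?m < ?D"
    then have "j \<noteq> w" using j t_w_eq_d_w by auto
    have D_pos: "0 < ?D" using t_w_eq_d_w t_pos[OF w_less_n] by simp
    then have "?D / c < ?D" using c_gt_1 by (simp add: divide_less_eq)
    define M where "M = max ?m (?D / c)"
    have M: "?m \<le> M" "?D / c \<le> M" "M < ?D" using m \<open>?D / c < ?D\<close> unfolding M_def by auto
    define x where "x = (M + ?D) / 2"
    have "M < x" "x < ?D" using M(3) by (simp_all add: x_def field_simps)
    then have x: "?m < x" "?D / c < x" "x < ?D" using M by linarith+
    then have "?D < c * x" using c_gt_1 by (simp add: divide_less_eq mult.commute)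
    have "0 \<le> x" using x j t_pos[OF j(1)] by simp
    have "?D < d j" using w_unique_min j \<open>j \<noteq> w\<close> by simp
    then have alloc_j: "alloc_Lc n L c d j = ?D / (L * d j)"
      using t_min_less_t_sec c_t_min_le_t_sec t_min_eq_d_w unfolding alloc_Lc_def N_min_def by simp
    have "?D / L = ?D / (L * d j) * d j" using \<open>?D < d j\<close> D_pos by simp
    also have "\<dots> \<le> alloc_Lc n L c d j * max (d j) (t j)"
      unfolding alloc_j using \<open>?D < d j\<close> D_pos L_pos by (intro mult_left_mono) auto
    also have "\<dots> \<le> alloc_Lc n L c (d(j := x)) j * max x (t j)"
      using no_profitable_deviation[OF j(1) \<open>0 \<le> x\<close>] .
    also have "\<dots> = x / L"
      using alloc_undercut[OF j(1) \<open>j \<noteq> w\<close> x(3) \<open>?D < c * x\<close>] x j by simp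
    finally have "?D / L \<le> x / L" .
    then show False using x L_pos by (simp add: divide_le_cancel)
  qed
  ultimately show ?thesis by simp
qed

lemma makespan_le: "makespan (alloc_Lc n L c) n t d \<le> (1 + (real n - 1) / L) * d w"
proof -
  let ?R = "{..<n} - {w}" and ?cost = "\<lambda>k. alloc_Lc n L c d k * max (d k) (t k)"
  have "makespan (alloc_Lc n L c) n t d = ?cost w + (\<Sum>k\<in>?R. ?cost k)"
    unfolding makespan_def using w_less_n by (simp add: sum.remove)
  also have "\<dots> \<le> d w + (\<Sum>k\<in>?R. d w / L)"
  proof (rule add_mono)
    have "alloc_Lc n L c d w \<le> 1" using alloc_w d_w_nonneg rest_weight_pos by simp
    then show "?cost w \<le> d w"
      using t_w_eq_d_w mult_right_mono[OF _ d_w_nonneg, of _ 1] by simp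
    show "(\<Sum>k\<in>?R. ?cost k) \<le> (\<Sum>k\<in>?R. d w / L)"
      using cost_le_t_min_div_L[of _ w] w_less_n t_min_eq_d_w by (intro sum_mono) auto
  qed
  also have "\<dots> = (1 + (real n - 1) / L) * d w"
    using w_less_n by (simp add: of_nat_diff field_simps)
  finally show ?thesis .
qed

end

context Lc_NE
begin

lemma makespan_ratio_le:
  "makespan (alloc_Lc n L c) n t d / Min (t ` {..<n}) \<le> 1 + (real n - 1) / L"
proof -
  obtain w where w: "w < n" "\<And>k. k < n \<Longrightarrow> k \<noteq> w \<Longrightarrow> d w < d k"
    using unique_min_exists by blast
  interpret Lc_NE_winner n L c t d w by unfold_locales (use w in auto)
  have "0 < d w" using t_w_eq_d_w t_pos[OF w_less_n] by simp
  then show ?thesis using makespan_le Min_t_eq_d_w by (simp add: divide_le_eq)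
qed

end

theorem theorem2:
  fixes n :: nat and L c :: real
  assumes "n \<ge> 2" and "L > 2 * (real n - 1)" and "c > 1"
  shows "pure_PoA (alloc_Lc n L c) n \<le> ereal (1 + (real n - 1) / L)"
  unfolding pure_PoA_def
proof (intro SUP_least)
  fix t d
  assume "t \<in> {t. \<forall>i<n. 0 < t i}" and "d \<in> {d. pure_NE (alloc_Lc n L c) n t d}"
  then interpret Lc_NE n L c t d using assms by unfold_locales auto
  show "ereal (makespan (alloc_Lc n L c) n t d / Min (t ` {..<n})) \<le> ereal (1 + (real n - 1) / L)"
    using makespan_ratio_le by simp
qed

end
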